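(* Let $a$ be a root of a unit $u$ in a spatial product system $\mathcal E$. Then $a_t\in\mathcal E^I_t$ for every $t>0$, i.e. $a$ lies in the type I part of $\mathcal E$.
   Context: A product system is a measurable family $(\mathcal E_t)_{t>0}$ of separable Hilbert spaces with an associative multiplication $\mathcal E_s\times\mathcal E_t\to\mathcal E_{s+t}$ inducing unitaries $\mathcal E_s\otimes\mathcal E_t\cong\mathcal E_{s+t}$. A unit is a measurable section $(u_t)$ of nonzero vectors with $u_{s+t}=u_su_t$; $\mathcal E$ is spatial if it has a unit. The type I part $\mathcal E^I$ is the smallest product subsystem containing all units. An additive unit of $u$ is a measurable section $(a_t)$ with $a_{s+t}=a_su_t+u_sa_t$ for all $s,t>0$; a root of $u$ is an additive unit with $\langle a_t,u_t\rangle=0$ for all $t>0$. *)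

theory Defs
  imports "HOL-Analysis.Analysis"
begin

text \<open>The distribution has no complex inner product spaces, so an ambient complex
Hilbert space is given by an abelian group 'h together with a complex scalar
multiplication sc and an inner product ip (conjugate linear in the first,
linear in the second argument), required to be complete for the induced norm.\<close>

definition hnorm :: "('h \<Rightarrow> 'h \<Rightarrow> complex) \<Rightarrow> 'h \<Rightarrow> real" where
  "hnorm ip x = sqrt (Re (ip x x))"

definition complex_hilbert :: "('h::ab_group_add \<Rightarrow> 'h \<Rightarrow> complex) \<Rightarrow> (complex \<Rightarrow> 'h \<Rightarrow> 'h) \<Rightarrow> bool" where
  "complex_hilbert ip sc \<longleftrightarrow>
     (\<forall>a x y. sc a (x + y) = sc a x + sc a y) \<and>
     (\<forall>a b x. sc (a + b) x = sc a x + sc b x) \<and>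
     (\<forall>a b x. sc a (sc b x) = sc (a * b) x) \<and>
     (\<forall>x. sc 1 x = x) \<and>
     (\<forall>x y z. ip x (y + z) = ip x y + ip x z) \<and>
     (\<forall>a x y. ip x (sc a y) = a * ip x y) \<and>
     (\<forall>x y. ip y x = cnj (ip x y)) \<and>
     (\<forall>x. 0 \<le> Re (ip x x)) \<and>
     (\<forall>x. ip x x = 0 \<longrightarrow> x = 0) \<and>
     (\<forall>X. (\<forall>e>0. \<exists>N. \<forall>m\<ge>N. \<forall>n\<ge>N. hnorm ip (X m - X n) < e) \<longrightarrow>
          (\<exists>L. (\<lambda>n. hnorm ip (X n - L)) \<longlonglongrightarrow> 0))"

definition lin_subspace :: "(complex \<Rightarrow> 'h \<Rightarrow> 'h) \<Rightarrow> 'h::ab_group_add set \<Rightarrow> bool" where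
  "lin_subspace sc A \<longleftrightarrow> 0 \<in> A \<and> (\<forall>x\<in>A. \<forall>y\<in>A. x + y \<in> A) \<and> (\<forall>c. \<forall>x\<in>A. sc c x \<in> A)"

definition hclosed :: "('h::ab_group_add \<Rightarrow> 'h \<Rightarrow> complex) \<Rightarrow> 'h set \<Rightarrow> bool" where
  "hclosed ip A \<longleftrightarrow> (\<forall>X L. (\<forall>n. X n \<in> A) \<and> (\<lambda>n. hnorm ip (X n - L)) \<longlonglongrightarrow> 0 \<longrightarrow> L \<in> A)"

definition closed_subspace :: "('h::ab_group_add \<Rightarrow> 'h \<Rightarrow> complex) \<Rightarrow> (complex \<Rightarrow> 'h \<Rightarrow> 'h) \<Rightarrow> 'h set \<Rightarrow> bool" where
  "closed_subspace ip sc A \<longleftrightarrow> lin_subspace sc A \<and> hclosed ip A"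

definition cspan :: "('h::ab_group_add \<Rightarrow> 'h \<Rightarrow> complex) \<Rightarrow> (complex \<Rightarrow> 'h \<Rightarrow> 'h) \<Rightarrow> 'h set \<Rightarrow> 'h set" where
  "cspan ip sc S = \<Inter> {A. closed_subspace ip sc A \<and> S \<subseteq> A}"

definition hseparable :: "('h::ab_group_add \<Rightarrow> 'h \<Rightarrow> complex) \<Rightarrow> 'h set \<Rightarrow> bool" where
  "hseparable ip A \<longleftrightarrow> (\<exists>D. countable D \<and> D \<subseteq> A \<and> (\<forall>x\<in>A. \<forall>e>0. \<exists>d\<in>D. hnorm ip (x - d) < e))"

text \<open>That it induces a unitary E s \<otimes> E t \<cong> E (s+t) is spelled out as: bilinear,
multiplicative on inner products, and with total range.  The measurable
structure is given (as for measurable fields of Hilbert spaces) by the set Sec of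
measurable sections: inner products of measurable sections are measurable,
Sec is maximal with this property, Sec contains a countable fundamental family,
and the multiplication is measurable.\<close>

definition pos_sec :: "(real \<Rightarrow> 'h set) \<Rightarrow> (real \<Rightarrow> 'h) \<Rightarrow> bool" where
  "pos_sec E f \<longleftrightarrow> (\<forall>t>0. f t \<in> E t)"

definition product_system ::
  "('h::ab_group_add \<Rightarrow> 'h \<Rightarrow> complex) \<Rightarrow> (complex \<Rightarrow> 'h \<Rightarrow> 'h) \<Rightarrow>
   (real \<Rightarrow> 'h set) \<Rightarrow> (real \<Rightarrow> real \<Rightarrow> 'h \<Rightarrow> 'h \<Rightarrow> 'h) \<Rightarrow> (real \<Rightarrow> 'h) set \<Rightarrow> bool" where
  "product_system ip sc E pm Sec \<longleftrightarrow>
     complex_hilbert ip sc \<and>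
     (\<forall>t>0. closed_subspace ip sc (E t) \<and> hseparable ip (E t)) \<and>
     (\<forall>s>0. \<forall>t>0. \<forall>x\<in>E s. \<forall>y\<in>E t. pm s t x y \<in> E (s + t)) \<and>
     (\<forall>s>0. \<forall>t>0. \<forall>x\<in>E s. \<forall>x'\<in>E s. \<forall>y\<in>E t.
        pm s t (x + x') y = pm s t x y + pm s t x' y) \<and>
     (\<forall>s>0. \<forall>t>0. \<forall>x\<in>E s. \<forall>y\<in>E t. \<forall>y'\<in>E t.
        pm s t x (y + y') = pm s t x y + pm s t x y') \<and>
     (\<forall>s>0. \<forall>t>0. \<forall>c. \<forall>x\<in>E s. \<forall>y\<in>E t.
        pm s t (sc c x) y = sc c (pm s t x y) \<and> pm s t x (sc c y) = sc c (pm s t x y)) \<and>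
     (\<forall>s>0. \<forall>t>0. \<forall>x\<in>E s. \<forall>x'\<in>E s. \<forall>y\<in>E t. \<forall>y'\<in>E t.
        ip (pm s t x y) (pm s t x' y') = ip x x' * ip y y') \<and>
     (\<forall>s>0. \<forall>t>0. cspan ip sc {pm s t x y | x y. x \<in> E s \<and> y \<in> E t} = E (s + t)) \<and>
     (\<forall>r>0. \<forall>s>0. \<forall>t>0. \<forall>x\<in>E r. \<forall>y\<in>E s. \<forall>z\<in>E t.
        pm (r + s) t (pm r s x y) z = pm r (s + t) x (pm s t y z)) \<and>
     (\<forall>f\<in>Sec. pos_sec E f) \<and>
     (\<forall>f\<in>Sec. \<forall>g\<in>Sec. (\<lambda>t. ip (f t) (g t)) \<in> borel_measurable (restrict_space lborel {0<..})) \<and>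
     (\<forall>f. pos_sec E f \<and> (\<forall>g\<in>Sec. (\<lambda>t. ip (g t) (f t)) \<in> borel_measurable (restrict_space lborel {0<..}))
          \<longrightarrow> f \<in> Sec) \<and>
     (\<exists>D. countable D \<and> D \<subseteq> Sec \<and> (\<forall>t>0. cspan ip sc ((\<lambda>g. g t) ` D) = E t)) \<and>
     (\<forall>f\<in>Sec. \<forall>g\<in>Sec. \<forall>h\<in>Sec.
        (\<lambda>(s, t). ip (pm s t (f s) (g t)) (h (s + t)))
          \<in> borel_measurable (restrict_space (lborel \<Otimes>\<^sub>M lborel) ({0<..} \<times> {0<..})))"

definition is_unit :: "(real \<Rightarrow> 'h set) \<Rightarrow> (real \<Rightarrow> real \<Rightarrow> 'h \<Rightarrow> 'h \<Rightarrow> 'h) \<Rightarrow> (real \<Rightarrow> 'h) set \<Rightarrow>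
    (real \<Rightarrow> 'h::ab_group_add) \<Rightarrow> bool" where
  "is_unit E pm Sec u \<longleftrightarrow> u \<in> Sec \<and> (\<forall>t>0. u t \<noteq> 0) \<and>
     (\<forall>s>0. \<forall>t>0. u (s + t) = pm s t (u s) (u t))"

definition spatial :: "(real \<Rightarrow> 'h::ab_group_add set) \<Rightarrow> (real \<Rightarrow> real \<Rightarrow> 'h \<Rightarrow> 'h \<Rightarrow> 'h) \<Rightarrow> (real \<Rightarrow> 'h) set \<Rightarrow> bool" where
  "spatial E pm Sec \<longleftrightarrow> (\<exists>u::real \<Rightarrow> 'h. is_unit E pm Sec u)"

definition additive_unit :: "(real \<Rightarrow> real \<Rightarrow> 'h \<Rightarrow> 'h \<Rightarrow> 'h) \<Rightarrow> (real \<Rightarrow> 'h) set \<Rightarrow>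
    (real \<Rightarrow> 'h::ab_group_add) \<Rightarrow> (real \<Rightarrow> 'h) \<Rightarrow> bool" where
  "additive_unit pm Sec u a \<longleftrightarrow> a \<in> Sec \<and>
     (\<forall>s>0. \<forall>t>0. a (s + t) = pm s t (a s) (u t) + pm s t (u s) (a t))"

definition is_root :: "('h \<Rightarrow> 'h \<Rightarrow> complex) \<Rightarrow> (real \<Rightarrow> real \<Rightarrow> 'h \<Rightarrow> 'h \<Rightarrow> 'h) \<Rightarrow> (real \<Rightarrow> 'h) set \<Rightarrow>
    (real \<Rightarrow> 'h::ab_group_add) \<Rightarrow> (real \<Rightarrow> 'h) \<Rightarrow> bool" where
  "is_root ip pm Sec u a \<longleftrightarrow> additive_unit pm Sec u a \<and> (\<forall>t>0. ip (a t) (u t) = 0)"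

text \<open>Product subsystems (families of closed subspaces F t \<subseteq> E t which are
themselves product systems under the restricted multiplication, i.e.
F (s+t) is the closed span of F s F t) and the type I part: the smallest
product subsystem containing all units, i.e. the intersection of all of them.\<close>

definition product_subsystem :: "('h::ab_group_add \<Rightarrow> 'h \<Rightarrow> complex) \<Rightarrow> (complex \<Rightarrow> 'h \<Rightarrow> 'h) \<Rightarrow>
    (real \<Rightarrow> 'h set) \<Rightarrow> (real \<Rightarrow> real \<Rightarrow> 'h \<Rightarrow> 'h \<Rightarrow> 'h) \<Rightarrow> (real \<Rightarrow> 'h set) \<Rightarrow> bool" where
  "product_subsystem ip sc E pm F \<longleftrightarrow>
     (\<forall>t>0. closed_subspace ip sc (F t) \<and> F t \<subseteq> E t) \<and>
     (\<forall>s>0. \<forall>t>0. cspan ip sc {pm s t x y | x y. x \<in> F s \<and> y \<in> F t} = F (s + t))"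

definition type_I_part :: "('h::ab_group_add \<Rightarrow> 'h \<Rightarrow> complex) \<Rightarrow> (complex \<Rightarrow> 'h \<Rightarrow> 'h) \<Rightarrow>
    (real \<Rightarrow> 'h set) \<Rightarrow> (real \<Rightarrow> real \<Rightarrow> 'h \<Rightarrow> 'h \<Rightarrow> 'h) \<Rightarrow> (real \<Rightarrow> 'h) set \<Rightarrow> real \<Rightarrow> 'h set" where
  "type_I_part ip sc E pm Sec t =
     \<Inter> {F t | F. product_subsystem ip sc E pm F \<and>
                  (\<forall>v. is_unit E pm Sec v \<longrightarrow> (\<forall>s>0. v s \<in> F s))}"

end

theory Submission
  imports Defs
begin

text \<open>A root \<open>b\<close> of the unit \<open>u\<close> can be exponentiated: the products of \<open>u\<^sub>s + b\<^sub>s\<close> over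
finer and finer partitions of \<open>[0, t]\<close> converge to a unit \<open>w\<^sub>t\<close>, and since \<open>b\<close> is orthogonal to \<open>u\<close>
one gets \<open>\<parallel>w\<^sub>t - (u\<^sub>t + b\<^sub>t)\<parallel> = O(\<parallel>b\<^sub>t\<parallel>\<^sup>2)\<close>.  Applied to the roots \<open>b / n\<close> this yields units
\<open>w\<^sup>n\<close> with \<open>n (w\<^sup>n\<^sub>t - u\<^sub>t) \<rightarrow> b\<^sub>t\<close>, so \<open>b\<^sub>t\<close> lies in every closed subspace containing all units at
time \<open>t\<close>, in particular in the type I part.\<close>

section \<open>Elementary Hilbert space geometry\<close>

locale complex_hilbert_space =
  fixes ip :: "'h::ab_group_add \<Rightarrow> 'h \<Rightarrow> complex" and sc :: "complex \<Rightarrow> 'h \<Rightarrow> 'h"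
  assumes complex_hilbert: "complex_hilbert ip sc"
begin

lemma sc_add_right: "sc a (x + y) = sc a x + sc a y"
  using complex_hilbert unfolding complex_hilbert_def by metis

lemma sc_add_left: "sc (a + b) x = sc a x + sc b x"
  using complex_hilbert unfolding complex_hilbert_def by metis

lemma sc_sc: "sc a (sc b x) = sc (a * b) x"
  using complex_hilbert unfolding complex_hilbert_def by metis

lemma sc_one: "sc 1 x = x"
  using complex_hilbert unfolding complex_hilbert_def by metis

lemma ip_add_right: "ip x (y + z) = ip x y + ip x z"
  using complex_hilbert unfolding complex_hilbert_def by metis

lemma ip_sc_right: "ip x (sc a y) = a * ip x y"
  using complex_hilbert unfolding complex_hilbert_def by metis

lemma ip_cnj: "ip y x = cnj (ip x y)"
  using complex_hilbert unfolding complex_hilbert_def by metis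

lemma ip_self_nonneg: "0 \<le> Re (ip x x)"
  using complex_hilbert unfolding complex_hilbert_def by metis

lemma ip_self_eq_0D: "ip x x = 0 \<Longrightarrow> x = 0"
  using complex_hilbert unfolding complex_hilbert_def by metis

lemma hilbert_complete: "(\<forall>e>0. \<exists>N. \<forall>m\<ge>N. \<forall>n\<ge>N. hnorm ip (X m - X n) < e) \<Longrightarrow>
    \<exists>L. (\<lambda>n. hnorm ip (X n - L)) \<longlonglongrightarrow> 0"
  using complex_hilbert unfolding complex_hilbert_def by metis

lemma sc_zero: "sc 0 x = 0"
  using sc_add_left[of 0 0 x] by simp

lemma sc_minus_one: "sc (-1) x = - x"
proof -
  have "sc 1 x + sc (-1) x = 0" using sc_add_left[of 1 "-1" x] by (simp add: sc_zero)
  then show ?thesis by (simp add: sc_one eq_neg_iff_add_eq_0 add.commute)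
qed

lemma sc_minus: "sc a (- x) = - sc a x"
proof -
  have "sc a x + sc a (- x) = 0"
    by (metis add.right_inverse sc_add_right mult_zero_right sc_sc sc_zero)
  then show ?thesis by (simp add: eq_neg_iff_add_eq_0 add.commute)
qed

lemma sc_diff_right: "sc a (x - y) = sc a x - sc a y"
  using sc_add_right[of a x "-y"] by (simp add: sc_minus)

lemma ip_zero_right: "ip x 0 = 0"
  using ip_add_right[of x 0 0] by simp

lemma ip_minus_right: "ip x (- y) = - ip x y"
  using ip_add_right[of x y "-y"] by (simp add: ip_zero_right eq_neg_iff_add_eq_0 add.commute)

lemma ip_diff_right: "ip x (y - z) = ip x y - ip x z"
  using ip_add_right[of x y "-z"] by (simp add: ip_minus_right)

lemma ip_add_left: "ip (x + y) z = ip x z + ip y z"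
  by (metis complex_cnj_add ip_add_right ip_cnj)

lemma ip_diff_left: "ip (x - y) z = ip x z - ip y z"
  by (metis complex_cnj_diff ip_cnj ip_diff_right)

lemma ip_minus_left: "ip (- x) z = - ip x z"
  by (metis complex_cnj_minus ip_cnj ip_minus_right)

lemma ip_sc_left: "ip (sc a x) y = cnj a * ip x y"
  by (metis complex_cnj_mult ip_cnj ip_sc_right)

lemma ip_self_real: "ip x x = complex_of_real (Re (ip x x))"
proof -
  have "Im (ip x x) = 0" using ip_cnj[of x x] by (metis Reals_cnj_iff complex_is_Real_iff)
  then show ?thesis by (simp add: complex_eq_iff)
qed

lemma lin_subspace_diff: "lin_subspace sc A \<Longrightarrow> x \<in> A \<Longrightarrow> y \<in> A \<Longrightarrow> x - y \<in> A"
  unfolding lin_subspace_def by (metis diff_conv_add_uminus sc_minus_one)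

lemma hclosedD: "hclosed ip A \<Longrightarrow> (\<And>n. X n \<in> A) \<Longrightarrow> (\<lambda>n. hnorm ip (X n - L)) \<longlonglongrightarrow> 0 \<Longrightarrow> L \<in> A"
  unfolding hclosed_def by blast

lemma hnorm_sq: "(hnorm ip x)\<^sup>2 = Re (ip x x)"
  unfolding hnorm_def by (simp add: ip_self_nonneg)

lemma hnorm_nonneg: "0 \<le> hnorm ip x"
  unfolding hnorm_def by (simp add: ip_self_nonneg)

lemma hnorm_eq_0_iff: "hnorm ip x = 0 \<longleftrightarrow> x = 0"
proof
  assume "hnorm ip x = 0"
  then have "ip x x = 0" using hnorm_sq[of x] ip_self_real[of x] by simp
  then show "x = 0" by (rule ip_self_eq_0D)
qed (simp add: hnorm_def ip_zero_right)

lemma cauchy_schwarz: "cmod (ip x y) \<le> hnorm ip x * hnorm ip y"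
proof (cases "y = 0")
  case True
  then show ?thesis by (simp add: ip_zero_right hnorm_nonneg)
next
  case False
  define B where "B = Re (ip y y)"
  have B: "B > 0"
    using False ip_self_real[of y] ip_self_eq_0D[of y] ip_self_nonneg[of y] B_def
    by (metis less_eq_real_def of_real_0)
  \<comment> \<open>expand \<open>0 \<le> \<langle>x - c y, x - c y\<rangle>\<close> at the minimizing \<open>c = \<langle>y, x\<rangle> / \<langle>y, y\<rangle>\<close>\<close>
  define c where "c = cnj (ip x y) / complex_of_real B"
  have "0 \<le> Re (ip (x - sc c y) (x - sc c y))" by (rule ip_self_nonneg)
  also have "ip (x - sc c y) (x - sc c y) =
      ip x x - c * ip x y - cnj c * cnj (ip x y) + cnj c * c * complex_of_real B"
    using ip_self_real[of y] ip_cnj[of y x]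
    by (simp add: ip_diff_left ip_diff_right ip_sc_left ip_sc_right algebra_simps B_def)
  also have "Re \<dots> = Re (ip x x) - (cmod (ip x y))\<^sup>2 / B"
    using B cmod_power2[of "ip x y"] by (simp add: c_def field_simps power2_eq_square)
  finally have "(cmod (ip x y))\<^sup>2 \<le> Re (ip x x) * B"
    using B by (simp add: field_simps)
  also have "\<dots> = (hnorm ip x * hnorm ip y)\<^sup>2"
    by (simp add: hnorm_sq power_mult_distrib B_def)
  finally show ?thesis
    using hnorm_nonneg power2_le_imp_le mult_nonneg_nonneg by metis
qed

lemma hnorm_triangle: "hnorm ip (x + y) \<le> hnorm ip x + hnorm ip y"
proof -
  have "ip (x + y) (x + y) = ip x x + ip y y + ip x y + cnj (ip x y)"
    using ip_cnj[of y x] by (simp add: ip_add_left ip_add_right)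
  moreover have "Re (ip x y) \<le> hnorm ip x * hnorm ip y"
    using cauchy_schwarz[of x y] complex_Re_le_cmod order_trans by blast
  ultimately have "(hnorm ip (x + y))\<^sup>2 \<le> (hnorm ip x + hnorm ip y)\<^sup>2"
    by (simp add: hnorm_sq power2_sum)
  then show ?thesis
    using hnorm_nonneg by (meson add_nonneg_nonneg power2_le_imp_le)
qed

lemma hnorm_minus_commute: "hnorm ip (x - y) = hnorm ip (y - x)"
  unfolding hnorm_def by (metis ip_minus_left ip_minus_right minus_diff_eq)

lemma hnorm_triangle_diff: "hnorm ip (x - z) \<le> hnorm ip (x - y) + hnorm ip (y - z)"
  using hnorm_triangle[of "x - y" "y - z"] by simp

lemma hnorm_sc: "hnorm ip (sc c x) = cmod c * hnorm ip x"
proof -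
  have "ip (sc c x) (sc c x) = complex_of_real ((cmod c)\<^sup>2 * Re (ip x x))"
    using complex_norm_square[of c] ip_self_real[of x]
    by (simp add: ip_sc_left ip_sc_right mult.assoc)
  then show ?thesis unfolding hnorm_def by (simp add: real_sqrt_mult)
qed

lemma ip_tendsto_right:
  assumes "(\<lambda>n. hnorm ip (X n - L)) \<longlonglongrightarrow> 0"
  shows "(\<lambda>n. ip g (X n)) \<longlonglongrightarrow> ip g L"
proof -
  have bound: "norm (ip g (X n) - ip g L) \<le> hnorm ip g * hnorm ip (X n - L)" for n
    using cauchy_schwarz[of g "X n - L"] by (simp add: ip_diff_right)
  have "(\<lambda>n. ip g (X n) - ip g L) \<longlonglongrightarrow> 0"
    by (rule Lim_null_comparison[OF always_eventually[OF allI[OF bound]]])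
      (rule tendsto_mult_right_zero[OF assms])
  then show ?thesis by (simp add: LIM_zero_iff)
qed

end

section \<open>Refinement of partitions\<close>

text \<open>A partition of an interval is the list of the lengths of its consecutive pieces;
\<open>refines R P\<close> says that \<open>R\<close> arises from \<open>P\<close> by subdividing every piece.\<close>

inductive refines :: "real list \<Rightarrow> real list \<Rightarrow> bool" where
  refines_Nil: "refines [] []"
| refines_append: "refines R P \<Longrightarrow> g \<noteq> [] \<Longrightarrow> refines (g @ R) (sum_list g # P)"

lemma refines_sum_list: "refines R P \<Longrightarrow> sum_list R = sum_list P"
  by (induction rule: refines.induct) auto

lemma refines_Nil_iff: "refines R [] \<longleftrightarrow> R = []"
  using refines.cases refines_Nil by blast

lemma refines_nonempty: "refines R P \<Longrightarrow> P \<noteq> [] \<Longrightarrow> R \<noteq> []"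
  by (induction rule: refines.induct) auto

lemma refines_ConsE:
  assumes "refines R (p # P)"
  obtains g R' where "R = g @ R'" "g \<noteq> []" "sum_list g = p" "refines R' P"
  using assms by (cases rule: refines.cases) auto

lemma sum_list_pos: "xs \<noteq> [] \<Longrightarrow> \<forall>x\<in>set xs. x > 0 \<Longrightarrow> sum_list xs > (0::real)"
  by (induction xs rule: list_nonempty_induct) auto

lemma refines_pos: "refines R P \<Longrightarrow> \<forall>x\<in>set R. x > 0 \<Longrightarrow> \<forall>x\<in>set P. x > 0"
  by (induction rule: refines.induct) (auto intro: sum_list_pos)

lemma refines_singleton: "g \<noteq> [] \<Longrightarrow> refines g [sum_list g]"
  using refines_append[OF refines_Nil, of g] by simp

lemma refines_Cons_Cons: "refines R P \<Longrightarrow> refines (p # R) (p # P)"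
  using refines_append[of R P "[p]"] by simp

lemma refines_Cons_diff:
  assumes "refines R ((q - p) # Q)"
  shows "refines (p # R) (q # Q)"
proof -
  obtain g R' where "R = g @ R'" "g \<noteq> []" "sum_list g = q - p" "refines R' Q"
    using assms by (rule refines_ConsE)
  then show ?thesis using refines_append[of R' Q "p # g"] by simp
qed

lemma common_refinement:
  assumes "\<forall>x\<in>set P. x > 0" "\<forall>x\<in>set Q. x > 0" "P \<noteq> []" "Q \<noteq> []" "sum_list P = sum_list Q"
  shows "\<exists>R. (\<forall>x\<in>set R. x > 0) \<and> refines R P \<and> refines R Q"
  using assms
proof (induction "length P + length Q" arbitrary: P Q rule: less_induct)
  case less
  obtain p P' q Q' where P: "P = p # P'" and Q: "Q = q # Q'"
    using less.prems(3,4) by (meson neq_Nil_conv)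
  have pos: "p > 0" "q > 0" "\<forall>x\<in>set P'. x > 0" "\<forall>x\<in>set Q'. x > 0"
    using less.prems(1,2) P Q by auto
  have sums: "sum_list P' \<ge> 0" "sum_list Q' \<ge> 0"
    using pos(3,4) by (meson less_imp_le sum_list_nonneg)+
  have Nil_iff: "xs = [] \<longleftrightarrow> sum_list xs = 0" if "\<forall>x\<in>set xs. x > (0::real)" for xs
    using sum_list_pos[of xs] that by force
  consider "p = q" | "p < q" | "q < p" by linarith
  then show ?case
  proof cases
    case 1
    show ?thesis
    proof (cases "P' = []")
      case True
      then have "Q' = []" using less.prems(5) P Q 1 Nil_iff[OF pos(4)] by simp
      then show ?thesis
        using True P Q 1 pos refines_singleton[of "[p]"] by (intro exI[of _ "[p]"]) auto
    next
      case False
      then have "Q' \<noteq> []" using less.prems(5) P Q 1 Nil_iff[OF pos(3)] Nil_iff[OF pos(4)] by simp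
      then obtain R where "\<forall>x\<in>set R. x > 0" "refines R P'" "refines R Q'"
        using less.hyps[of P' Q'] False pos less.prems(5) P Q 1 by auto
      then show ?thesis using P Q 1 pos refines_Cons_Cons by (intro exI[of _ "p # R"]) auto
    qed
  next
    case 2
    have "P' \<noteq> []" using less.prems(5) P Q 2 sums by auto
    then obtain R where "\<forall>x\<in>set R. x > 0" "refines R P'" "refines R ((q - p) # Q')"
      using less.hyps[of P' "(q - p) # Q'"] pos 2 less.prems(5) P Q by auto
    then show ?thesis
      using P Q pos refines_Cons_Cons refines_Cons_diff by (intro exI[of _ "p # R"]) auto
  next
    case 3
    have "Q' \<noteq> []" using less.prems(5) P Q 3 sums by auto
    then obtain R where "\<forall>x\<in>set R. x > 0" "refines R ((p - q) # P')" "refines R Q'"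
      using less.hyps[of "(p - q) # P'" Q'] pos 3 less.prems(5) P Q by auto
    then show ?thesis
      using P Q pos refines_Cons_Cons refines_Cons_diff by (intro exI[of _ "q # R"]) auto
  qed
qed

definition uniform_partition :: "nat \<Rightarrow> real \<Rightarrow> real list" where
  "uniform_partition n t = replicate (Suc n) (t / real (Suc n))"

lemma uniform_partition_nonempty: "uniform_partition n t \<noteq> []"
  by (simp add: uniform_partition_def)

lemma uniform_partition_pos: "t > 0 \<Longrightarrow> \<forall>d\<in>set (uniform_partition n t). d > 0"
  by (simp add: uniform_partition_def)

lemma sum_list_uniform_partition: "sum_list (uniform_partition n t) = t"
proof -
  have "real (Suc n) * (t / real (Suc n)) = t" by (simp del: of_nat_Suc)
  then show ?thesis unfolding uniform_partition_def sum_list_replicate by simp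
qed

lemma uniform_partition_Suc:
  "uniform_partition (Suc n) t = t / real (Suc (Suc n)) # uniform_partition n ((1 - 1 / real (Suc (Suc n))) * t)"
proof -
  have "(1 - 1 / real (Suc (Suc n))) * t / real (Suc n) = t / real (Suc (Suc n))"
    by (simp add: field_simps del: of_nat_Suc) (simp add: algebra_simps)
  then show ?thesis by (simp add: uniform_partition_def del: of_nat_Suc)
qed

lemma div_Suc_tendsto_0: "(\<lambda>n. c / real (Suc n)) \<longlonglongrightarrow> (0::real)"
  using tendsto_mult_right_zero[OF LIMSEQ_inverse_real_of_nat, of c] by (simp add: divide_inverse)

lemma prod_list_one_plus_ge_1: "\<forall>x\<in>set xs. x \<ge> (0::real) \<Longrightarrow> prod_list (map (\<lambda>x. 1 + x) xs) \<ge> 1"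
proof (induction xs)
  case (Cons a xs)
  then have "1 * 1 \<le> (1 + a) * prod_list (map (\<lambda>x. 1 + x) xs)" by (intro mult_mono) auto
  then show ?case by simp
qed simp

lemma prod_list_one_plus_le_exp:
  "\<forall>x\<in>set xs. x \<ge> (0::real) \<Longrightarrow> prod_list (map (\<lambda>x. 1 + x) xs) \<le> exp (sum_list xs)"
proof (induction xs)
  case (Cons a xs)
  then have "prod_list (map (\<lambda>x. 1 + x) (a # xs)) \<le> exp a * exp (sum_list xs)"
    using exp_ge_add_one_self[of a] prod_list_one_plus_ge_1[of xs] by (simp, intro mult_mono) auto
  then show ?case by (simp add: exp_add)
qed simp

lemma exp_le_prod_list_one_plus:
  assumes "\<forall>x\<in>set xs. 0 \<le> x \<and> x \<le> e" "e \<le> (1::real)"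
  shows "exp ((1 - e) * sum_list xs) \<le> prod_list (map (\<lambda>x. 1 + x) xs)"
  using assms(1)
proof (induction xs)
  case (Cons a xs)
  then have a: "0 \<le> a" "a \<le> e" by auto
  have "(1 - e) * a \<le> a - a\<^sup>2"
    using mult_left_mono[OF a(2) a(1)] by (simp add: power2_eq_square algebra_simps)
  also have "\<dots> \<le> ln (1 + a)"
    using a assms(2) by (intro ln_one_plus_pos_lower_bound) auto
  finally have "exp ((1 - e) * a) \<le> 1 + a"
    using a by (metis exp_le_cancel_iff exp_ln add_pos_nonneg zero_less_one)
  then have "exp ((1 - e) * a) * exp ((1 - e) * sum_list xs) \<le> (1 + a) * prod_list (map (\<lambda>x. 1 + x) xs)"
    using Cons a by (intro mult_mono) auto
  then show ?case by (simp add: exp_add[symmetric] algebra_simps)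
qed simp

locale prod_system =
  fixes ip :: "'h::ab_group_add \<Rightarrow> 'h \<Rightarrow> complex" and sc :: "complex \<Rightarrow> 'h \<Rightarrow> 'h"
    and E :: "real \<Rightarrow> 'h set" and pm :: "real \<Rightarrow> real \<Rightarrow> 'h \<Rightarrow> 'h \<Rightarrow> 'h"
    and Sec :: "(real \<Rightarrow> 'h) set"
  assumes product_system: "product_system ip sc E pm Sec"

sublocale prod_system \<subseteq> complex_hilbert_space ip sc
  using product_system unfolding product_system_def by unfold_locales blast

context prod_system
begin

lemma fibre_closed_subspace: "t > 0 \<Longrightarrow> closed_subspace ip sc (E t)"
  using product_system unfolding product_system_def by (elim conjE) meson

lemma pm_mem: "s > 0 \<Longrightarrow> t > 0 \<Longrightarrow> x \<in> E s \<Longrightarrow> y \<in> E t \<Longrightarrow> pm s t x y \<in> E (s + t)"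
  using product_system unfolding product_system_def by (elim conjE) meson

lemma pm_add_left: "s > 0 \<Longrightarrow> t > 0 \<Longrightarrow> x \<in> E s \<Longrightarrow> x' \<in> E s \<Longrightarrow> y \<in> E t \<Longrightarrow>
    pm s t (x + x') y = pm s t x y + pm s t x' y"
  using product_system unfolding product_system_def by (elim conjE) meson

lemma pm_add_right: "s > 0 \<Longrightarrow> t > 0 \<Longrightarrow> x \<in> E s \<Longrightarrow> y \<in> E t \<Longrightarrow> y' \<in> E t \<Longrightarrow>
    pm s t x (y + y') = pm s t x y + pm s t x y'"
  using product_system unfolding product_system_def by (elim conjE) meson

lemma pm_sc_left: "s > 0 \<Longrightarrow> t > 0 \<Longrightarrow> x \<in> E s \<Longrightarrow> y \<in> E t \<Longrightarrow> pm s t (sc c x) y = sc c (pm s t x y)"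
  and pm_sc_right: "s > 0 \<Longrightarrow> t > 0 \<Longrightarrow> x \<in> E s \<Longrightarrow> y \<in> E t \<Longrightarrow> pm s t x (sc c y) = sc c (pm s t x y)"
  using product_system unfolding product_system_def by (elim conjE, meson)+

lemma pm_ip: "s > 0 \<Longrightarrow> t > 0 \<Longrightarrow> x \<in> E s \<Longrightarrow> x' \<in> E s \<Longrightarrow> y \<in> E t \<Longrightarrow> y' \<in> E t \<Longrightarrow>
    ip (pm s t x y) (pm s t x' y') = ip x x' * ip y y'"
  using product_system unfolding product_system_def by (elim conjE) meson

lemma pm_assoc: "r > 0 \<Longrightarrow> s > 0 \<Longrightarrow> t > 0 \<Longrightarrow> x \<in> E r \<Longrightarrow> y \<in> E s \<Longrightarrow> z \<in> E t \<Longrightarrow>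
    pm (r + s) t (pm r s x y) z = pm r (s + t) x (pm s t y z)"
  using product_system unfolding product_system_def by (elim conjE) meson

lemma Sec_mem: "f \<in> Sec \<Longrightarrow> t > 0 \<Longrightarrow> f t \<in> E t"
  using product_system unfolding product_system_def pos_sec_def by (elim conjE) meson

lemma Sec_ip_measurable: "f \<in> Sec \<Longrightarrow> g \<in> Sec \<Longrightarrow>
    (\<lambda>t. ip (f t) (g t)) \<in> borel_measurable (restrict_space lborel {0<..})"
  using product_system unfolding product_system_def by (elim conjE) meson

lemma Sec_maximal: "(\<And>t. t > 0 \<Longrightarrow> f t \<in> E t) \<Longrightarrow>
    (\<And>g. g \<in> Sec \<Longrightarrow> (\<lambda>t. ip (g t) (f t)) \<in> borel_measurable (restrict_space lborel {0<..})) \<Longrightarrow>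
    f \<in> Sec"
  using product_system unfolding product_system_def pos_sec_def by (elim conjE) meson

lemma Sec_pm_measurable: "f \<in> Sec \<Longrightarrow> g \<in> Sec \<Longrightarrow> h \<in> Sec \<Longrightarrow>
    (\<lambda>(s, t). ip (pm s t (f s) (g t)) (h (s + t)))
      \<in> borel_measurable (restrict_space (lborel \<Otimes>\<^sub>M lborel) ({0<..} \<times> {0<..}))"
  using product_system unfolding product_system_def by (elim conjE) meson

lemma fibre_lin_subspace: "t > 0 \<Longrightarrow> lin_subspace sc (E t)"
  and fibre_hclosed: "t > 0 \<Longrightarrow> hclosed ip (E t)"
  using fibre_closed_subspace unfolding closed_subspace_def by simp_all

lemma fibre_add: "t > 0 \<Longrightarrow> x \<in> E t \<Longrightarrow> y \<in> E t \<Longrightarrow> x + y \<in> E t"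
  and fibre_sc: "t > 0 \<Longrightarrow> x \<in> E t \<Longrightarrow> sc c x \<in> E t"
  using fibre_lin_subspace unfolding lin_subspace_def by simp_all

lemma fibre_diff: "t > 0 \<Longrightarrow> x \<in> E t \<Longrightarrow> y \<in> E t \<Longrightarrow> x - y \<in> E t"
  using fibre_lin_subspace lin_subspace_diff by blast

lemma pm_diff_left: "s > 0 \<Longrightarrow> t > 0 \<Longrightarrow> x \<in> E s \<Longrightarrow> x' \<in> E s \<Longrightarrow> y \<in> E t \<Longrightarrow>
    pm s t (x - x') y = pm s t x y - pm s t x' y"
  using pm_add_left[of s t "x - x'" x' y] fibre_diff by simp

lemma pm_diff_right: "s > 0 \<Longrightarrow> t > 0 \<Longrightarrow> x \<in> E s \<Longrightarrow> y \<in> E t \<Longrightarrow> y' \<in> E t \<Longrightarrow>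
    pm s t x (y - y') = pm s t x y - pm s t x y'"
  using pm_add_right[of s t x "y - y'" y'] fibre_diff by simp

lemma hnorm_pm: "s > 0 \<Longrightarrow> t > 0 \<Longrightarrow> x \<in> E s \<Longrightarrow> y \<in> E t \<Longrightarrow>
    hnorm ip (pm s t x y) = hnorm ip x * hnorm ip y"
proof -
  assume "s > 0" "t > 0" "x \<in> E s" "y \<in> E t"
  then have "ip (pm s t x y) (pm s t x y) = complex_of_real (Re (ip x x) * Re (ip y y))"
    using pm_ip ip_self_real[of x] ip_self_real[of y] by (metis of_real_mult)
  then show ?thesis unfolding hnorm_def by (simp add: real_sqrt_mult)
qed

lemma hnorm_pm_diff_le:
  assumes "s > 0" "t > 0" "x \<in> E s" "x' \<in> E s" "y \<in> E t" "y' \<in> E t"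
  shows "hnorm ip (pm s t x y - pm s t x' y') \<le> hnorm ip (x - x') * hnorm ip y + hnorm ip x' * hnorm ip (y - y')"
proof -
  have "pm s t x y - pm s t x' y' = pm s t (x - x') y + pm s t x' (y - y')"
    using assms by (simp add: pm_diff_left pm_diff_right)
  then have "hnorm ip (pm s t x y - pm s t x' y') \<le>
      hnorm ip (pm s t (x - x') y) + hnorm ip (pm s t x' (y - y'))"
    by (simp add: hnorm_triangle)
  then show ?thesis
    using assms by (simp add: hnorm_pm fibre_diff)
qed

lemma Sec_add: "f \<in> Sec \<Longrightarrow> g \<in> Sec \<Longrightarrow> (\<lambda>t. f t + g t) \<in> Sec"
proof (rule Sec_maximal)
  fix h assume "f \<in> Sec" "g \<in> Sec" "h \<in> Sec"
  then have "(\<lambda>t. ip (h t) (f t) + ip (h t) (g t)) \<in> borel_measurable (restrict_space lborel {0<..})"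
    by (intro borel_measurable_add Sec_ip_measurable)
  then show "(\<lambda>t. ip (h t) (f t + g t)) \<in> borel_measurable (restrict_space lborel {0<..})"
    by (simp add: ip_add_right)
qed (simp add: fibre_add Sec_mem)

lemma Sec_sc: "f \<in> Sec \<Longrightarrow> (\<lambda>t. sc c (f t)) \<in> Sec"
proof (rule Sec_maximal)
  fix h assume "f \<in> Sec" "h \<in> Sec"
  then have "(\<lambda>t. c * ip (h t) (f t)) \<in> borel_measurable (restrict_space lborel {0<..})"
    by (intro borel_measurable_times borel_measurable_const Sec_ip_measurable)
  then show "(\<lambda>t. ip (h t) (sc c (f t))) \<in> borel_measurable (restrict_space lborel {0<..})"
    by (simp add: ip_sc_right)
qed (simp add: fibre_sc Sec_mem)

lemma Sec_limit:
  assumes "\<And>n. F n \<in> Sec" and "pos_sec E f"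
    and "\<And>t. t > 0 \<Longrightarrow> (\<lambda>n. hnorm ip (F n t - f t)) \<longlonglongrightarrow> 0"
  shows "f \<in> Sec"
proof (rule Sec_maximal)
  fix h assume h: "h \<in> Sec"
  show "(\<lambda>t. ip (h t) (f t)) \<in> borel_measurable (restrict_space lborel {0<..})"
  proof (rule borel_measurable_LIMSEQ_metric)
    show "(\<lambda>t. ip (h t) (F n t)) \<in> borel_measurable (restrict_space lborel {0<..})" for n
      using h assms(1) by (rule Sec_ip_measurable)
    show "(\<lambda>n. ip (h t) (F n t)) \<longlonglongrightarrow> ip (h t) (f t)" if "t \<in> space (restrict_space lborel {0<..})" for t
      using that assms(3) by (intro ip_tendsto_right) (simp add: space_restrict_space)
  qed
qed (use assms(2) in \<open>simp add: pos_sec_def\<close>)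

fun sec_prod :: "(real \<Rightarrow> 'h) \<Rightarrow> real list \<Rightarrow> 'h" where
  "sec_prod f [] = 0"
| "sec_prod f [d] = f d"
| "sec_prod f (d # e # ds) = pm d (sum_list (e # ds)) (f d) (sec_prod f (e # ds))"

lemma sec_prod_Cons: "ds \<noteq> [] \<Longrightarrow> sec_prod f (d # ds) = pm d (sum_list ds) (f d) (sec_prod f ds)"
  by (cases ds) auto

lemma sec_prod_mem:
  "ds \<noteq> [] \<Longrightarrow> \<forall>d\<in>set ds. d > 0 \<Longrightarrow> pos_sec E f \<Longrightarrow> sec_prod f ds \<in> E (sum_list ds)"
  by (induction ds rule: list_nonempty_induct)
    (auto simp: sec_prod_Cons pos_sec_def intro!: pm_mem sum_list_pos)

lemma sec_prod_append:
  assumes "ds \<noteq> []" "es \<noteq> []" "\<forall>d\<in>set ds. d > 0" "\<forall>e\<in>set es. e > 0" "pos_sec E f"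
  shows "sec_prod f (ds @ es) = pm (sum_list ds) (sum_list es) (sec_prod f ds) (sec_prod f es)"
  using assms
proof (induction ds rule: list_nonempty_induct)
  case (single d)
  then show ?case by (simp add: sec_prod_Cons)
next
  case (cons d ds)
  have "sec_prod f ((d # ds) @ es) =
      pm d (sum_list ds + sum_list es) (f d) (pm (sum_list ds) (sum_list es) (sec_prod f ds) (sec_prod f es))"
    using cons by (simp add: sec_prod_Cons)
  also have "\<dots> = pm (d + sum_list ds) (sum_list es) (pm d (sum_list ds) (f d) (sec_prod f ds)) (sec_prod f es)"
    using cons by (intro pm_assoc[symmetric] sum_list_pos sec_prod_mem) (auto simp: pos_sec_def)
  finally show ?case using cons by (simp add: sec_prod_Cons)
qed

lemma Sec_pm_split:
  assumes "f \<in> Sec" "g \<in> Sec" "0 < c" "c < 1"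
  shows "(\<lambda>t. pm (c * t) ((1 - c) * t) (f (c * t)) (g ((1 - c) * t))) \<in> Sec"
proof (rule Sec_maximal)
  fix t :: real assume "t > 0"
  then show "pm (c * t) ((1 - c) * t) (f (c * t)) (g ((1 - c) * t)) \<in> E t"
    using assms pm_mem[of "c * t" "(1 - c) * t"] Sec_mem by (simp add: algebra_simps)
next
  fix h assume h: "h \<in> Sec"
  define split where "split t = (c * t, (1 - c) * t)" for t :: real
  have "split \<in> restrict_space lborel {0<..} \<rightarrow>\<^sub>M restrict_space (lborel \<Otimes>\<^sub>M lborel) ({0<..} \<times> {0<..})"
    unfolding split_def using assms(3,4)
    by (intro measurable_restrict_space3 measurable_Pair) (auto simp: measurable_lborel2)
  from measurable_compose[OF this Sec_pm_measurable[OF assms(1,2) h]]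
  have "(\<lambda>t. ip (pm (c * t) ((1 - c) * t) (f (c * t)) (g ((1 - c) * t))) (h t))
      \<in> borel_measurable (restrict_space lborel {0<..})"
    unfolding split_def by (simp add: ring_distribs(2)[symmetric])
  then have "(\<lambda>t. cnj (ip (pm (c * t) ((1 - c) * t) (f (c * t)) (g ((1 - c) * t))) (h t)))
      \<in> borel_measurable (restrict_space lborel {0<..})"
    by (rule borel_measurable_continuous_on[OF linear_continuous_on[OF bounded_linear_cnj]])
  then show "(\<lambda>t. ip (h t) (pm (c * t) ((1 - c) * t) (f (c * t)) (g ((1 - c) * t))))
      \<in> borel_measurable (restrict_space lborel {0<..})"
    by (subst ip_cnj) simp
qed

lemma sec_prod_uniform_partition_Sec: "f \<in> Sec \<Longrightarrow> (\<lambda>t. sec_prod f (uniform_partition n t)) \<in> Sec"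
proof (induction n)
  case 0
  then show ?case by (simp add: uniform_partition_def)
next
  case (Suc n)
  define c where "c = 1 / real (Suc (Suc n))"
  have c: "0 < c" "c < 1" unfolding c_def by (auto simp del: of_nat_Suc)
  have "sec_prod f (uniform_partition (Suc n) t) =
      pm (c * t) ((1 - c) * t) (f (c * t)) (sec_prod f (uniform_partition n ((1 - c) * t)))" for t
    unfolding uniform_partition_Suc c_def
    by (simp add: sec_prod_Cons uniform_partition_nonempty sum_list_uniform_partition)
  then show ?case using Sec_pm_split[OF Suc.prems Suc.IH[OF Suc.prems] c] by simp
qed

end

section \<open>The exponential of a root\<close>

locale unit_with_root = prod_system +
  fixes u b
  assumes unit: "is_unit E pm Sec u"
    and root: "is_root ip pm Sec u b"
begin

lemma u_Sec: "u \<in> Sec"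
  and u_nonzero: "t > 0 \<Longrightarrow> u t \<noteq> 0"
  and u_add: "s > 0 \<Longrightarrow> t > 0 \<Longrightarrow> u (s + t) = pm s t (u s) (u t)"
  using unit unfolding is_unit_def by auto

lemma b_Sec: "b \<in> Sec"
  and b_add: "s > 0 \<Longrightarrow> t > 0 \<Longrightarrow> b (s + t) = pm s t (b s) (u t) + pm s t (u s) (b t)"
  and ip_b_u: "t > 0 \<Longrightarrow> ip (b t) (u t) = 0"
  using root unfolding is_root_def additive_unit_def by auto

lemma ip_u_b: "t > 0 \<Longrightarrow> ip (u t) (b t) = 0"
  by (subst ip_cnj) (simp add: ip_b_u)

lemma u_mem: "t > 0 \<Longrightarrow> u t \<in> E t"
  and b_mem: "t > 0 \<Longrightarrow> b t \<in> E t"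
  using Sec_mem u_Sec b_Sec by blast+

text \<open>\<open>phi\<close> is multiplicative and \<open>psi\<close> additive in \<open>t\<close>; \<open>v = u + b\<close> is the first order
approximation of the unit \<open>expo\<close> constructed below.\<close>

definition phi :: "real \<Rightarrow> real" where "phi t = Re (ip (u t) (u t))"
definition psi :: "real \<Rightarrow> real" where "psi t = Re (ip (b t) (b t)) / phi t"
definition v where "v t = u t + b t"

lemma phi_pos: "t > 0 \<Longrightarrow> phi t > 0"
proof -
  assume "t > 0"
  then have "phi t \<noteq> 0"
    using u_nonzero ip_self_eq_0D ip_self_real unfolding phi_def by (metis of_real_0)
  then show ?thesis
    using ip_self_nonneg unfolding phi_def by (simp add: less_le)
qed

lemma psi_nonneg: "t > 0 \<Longrightarrow> psi t \<ge> 0"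
  unfolding psi_def by (intro divide_nonneg_pos ip_self_nonneg phi_pos)

lemma ip_u_u: "ip (u t) (u t) = complex_of_real (phi t)"
  unfolding phi_def by (rule ip_self_real)

lemma ip_b_b: "t > 0 \<Longrightarrow> ip (b t) (b t) = complex_of_real (phi t * psi t)"
  using phi_pos[of t] ip_self_real[of "b t"] by (simp add: psi_def)

lemma phi_add:
  assumes "s > 0" "t > 0"
  shows "phi (s + t) = phi s * phi t"
proof -
  have "complex_of_real (phi (s + t)) = ip (u (s + t)) (u (s + t))" by (simp add: ip_u_u)
  also have "\<dots> = ip (u s) (u s) * ip (u t) (u t)" using assms by (simp add: u_add pm_ip u_mem)
  also have "\<dots> = complex_of_real (phi s * phi t)" by (simp add: ip_u_u)
  finally show ?thesis by (simp only: of_real_eq_iff)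
qed

lemma psi_add:
  assumes "s > 0" "t > 0"
  shows "psi (s + t) = psi s + psi t"
proof -
  have "ip (b (s + t)) (b (s + t)) = ip (b s) (b s) * ip (u t) (u t) + ip (u s) (u s) * ip (b t) (b t)"
    using assms by (simp add: b_add ip_add_left ip_add_right pm_ip u_mem b_mem ip_u_b ip_b_u)
  then have "phi (s + t) * psi (s + t) = phi s * psi s * phi t + phi s * (phi t * psi t)"
    using assms by (simp add: ip_b_b ip_u_u flip: of_real_mult of_real_add)
  then have "(phi s * phi t) * psi (s + t) = (phi s * phi t) * (psi s + psi t)"
    using assms by (simp add: phi_add algebra_simps)
  then show ?thesis
    using phi_pos[OF assms(1)] phi_pos[OF assms(2)] by simp
qed

lemma v_pos_sec: "pos_sec E v"
  unfolding pos_sec_def v_def using u_mem b_mem fibre_add by blast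

lemma v_mem: "t > 0 \<Longrightarrow> v t \<in> E t"
  using v_pos_sec unfolding pos_sec_def by blast

lemma v_Sec: "v \<in> Sec"
  unfolding v_def using u_Sec b_Sec by (rule Sec_add)

lemma ip_u_v: "t > 0 \<Longrightarrow> ip (u t) (v t) = complex_of_real (phi t)"
  and ip_b_v: "t > 0 \<Longrightarrow> ip (b t) (v t) = complex_of_real (phi t * psi t)"
  and ip_v_v: "t > 0 \<Longrightarrow> ip (v t) (v t) = complex_of_real (phi t * (1 + psi t))"
  by (simp_all add: v_def ip_add_left ip_add_right ip_u_u ip_b_b ip_u_b ip_b_u algebra_simps)

lemma psi_sum_list: "ds \<noteq> [] \<Longrightarrow> \<forall>d\<in>set ds. d > 0 \<Longrightarrow> psi (sum_list ds) = sum_list (map psi ds)"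
  by (induction ds rule: list_nonempty_induct) (auto simp: psi_add sum_list_pos)

abbreviation vprod :: "real list \<Rightarrow> 'a" where "vprod \<equiv> sec_prod v"

definition psi_prod :: "real list \<Rightarrow> real" where
  "psi_prod ds = prod_list (map (\<lambda>d. 1 + psi d) ds)"

lemma vprod_mem: "ds \<noteq> [] \<Longrightarrow> \<forall>d\<in>set ds. d > 0 \<Longrightarrow> vprod ds \<in> E (sum_list ds)"
  using sec_prod_mem v_pos_sec by blast

lemma ip_u_vprod:
  "ds \<noteq> [] \<Longrightarrow> \<forall>d\<in>set ds. d > 0 \<Longrightarrow> ip (u (sum_list ds)) (vprod ds) = complex_of_real (phi (sum_list ds))"
proof (induction ds rule: list_nonempty_induct)
  case (single d)
  then show ?case by (simp add: ip_u_v)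
next
  case (cons d ds)
  then have "ip (u (sum_list (d # ds))) (vprod (d # ds)) = ip (u d) (v d) * ip (u (sum_list ds)) (vprod ds)"
    by (simp add: u_add sec_prod_Cons pm_ip u_mem v_mem vprod_mem sum_list_pos)
  then show ?case using cons by (simp add: ip_u_v phi_add sum_list_pos)
qed

lemma ip_b_vprod:
  "ds \<noteq> [] \<Longrightarrow> \<forall>d\<in>set ds. d > 0 \<Longrightarrow>
    ip (b (sum_list ds)) (vprod ds) = complex_of_real (phi (sum_list ds) * psi (sum_list ds))"
proof (induction ds rule: list_nonempty_induct)
  case (single d)
  then show ?case by (simp add: ip_b_v)
next
  case (cons d ds)
  then have "ip (b (sum_list (d # ds))) (vprod (d # ds)) =
      ip (b d) (v d) * ip (u (sum_list ds)) (vprod ds) + ip (u d) (v d) * ip (b (sum_list ds)) (vprod ds)"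
    by (simp add: b_add sec_prod_Cons pm_ip ip_add_left u_mem b_mem v_mem vprod_mem sum_list_pos)
  then show ?case
    using cons by (simp add: ip_u_v ip_b_v ip_u_vprod phi_add psi_add sum_list_pos algebra_simps)
qed

lemma ip_v_vprod:
  "ds \<noteq> [] \<Longrightarrow> \<forall>d\<in>set ds. d > 0 \<Longrightarrow>
    ip (v (sum_list ds)) (vprod ds) = complex_of_real (phi (sum_list ds) * (1 + psi (sum_list ds)))"
  unfolding v_def[of "sum_list ds"] by (simp add: ip_add_left ip_u_vprod ip_b_vprod algebra_simps)

lemma ip_vprod_vprod:
  "ds \<noteq> [] \<Longrightarrow> \<forall>d\<in>set ds. d > 0 \<Longrightarrow>
    ip (vprod ds) (vprod ds) = complex_of_real (phi (sum_list ds) * psi_prod ds)"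
proof (induction ds rule: list_nonempty_induct)
  case (single d)
  then show ?case by (simp add: ip_v_v psi_prod_def)
next
  case (cons d ds)
  then have "ip (vprod (d # ds)) (vprod (d # ds)) = ip (v d) (v d) * ip (vprod ds) (vprod ds)"
    by (simp add: sec_prod_Cons pm_ip v_mem vprod_mem sum_list_pos)
  then show ?case using cons by (simp add: ip_v_v phi_add psi_prod_def sum_list_pos)
qed

text \<open>Refining a partition only changes \<open>vprod\<close> in its component orthogonal to \<open>vprod P\<close>.\<close>

lemma ip_vprod_refines:
  "refines Q P \<Longrightarrow> \<forall>d\<in>set Q. d > 0 \<Longrightarrow> P \<noteq> [] \<Longrightarrow>
    ip (vprod P) (vprod Q) = complex_of_real (phi (sum_list P) * psi_prod P)"
proof (induction rule: refines.induct)
  case (refines_append R P g)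
  then have g: "\<forall>d\<in>set g. d > 0" "sum_list g > 0" and R: "\<forall>d\<in>set R. d > 0"
    using sum_list_pos by auto
  show ?case
  proof (cases "P = []")
    case True
    then show ?thesis
      using refines_append refines_Nil_iff ip_v_vprod[OF refines_append(2) g(1)] by (simp add: psi_prod_def)
  next
    case False
    have R_ne: "R \<noteq> []" and P: "\<forall>d\<in>set P. d > 0" and sum_R: "sum_list R = sum_list P"
      using refines_nonempty refines_pos refines_sum_list refines_append R False by blast+
    then have "ip (vprod (sum_list g # P)) (vprod (g @ R)) = ip (v (sum_list g)) (vprod g) * ip (vprod P) (vprod R)"
      using False refines_append(2) g R vprod_mem[OF R_ne R]
      by (simp add: sec_prod_Cons sec_prod_append v_pos_sec v_mem pm_ip vprod_mem sum_list_pos)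
    then show ?thesis
      using refines_append(3)[OF R False] ip_v_vprod[OF refines_append(2) g(1)] g P False
      by (simp add: phi_add psi_prod_def sum_list_pos)
  qed
qed simp

lemma hnorm_vprod_refines_sq:
  assumes "refines Q P" "\<forall>d\<in>set Q. d > 0" "P \<noteq> []"
  shows "(hnorm ip (vprod P - vprod Q))\<^sup>2 = phi (sum_list P) * (psi_prod Q - psi_prod P)"
proof -
  have Q: "Q \<noteq> []" and P: "\<forall>d\<in>set P. d > 0" and sum_Q: "sum_list Q = sum_list P"
    using assms refines_nonempty refines_pos refines_sum_list by blast+
  have PQ: "ip (vprod P) (vprod Q) = complex_of_real (phi (sum_list P) * psi_prod P)"
    using ip_vprod_refines[OF assms] .
  then have QP: "ip (vprod Q) (vprod P) = complex_of_real (phi (sum_list P) * psi_prod P)"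
    by (subst ip_cnj) simp
  have "ip (vprod P - vprod Q) (vprod P - vprod Q) =
      ip (vprod P) (vprod P) - ip (vprod P) (vprod Q) - (ip (vprod Q) (vprod P) - ip (vprod Q) (vprod Q))"
    by (simp add: ip_diff_left ip_diff_right)
  also have "\<dots> = complex_of_real (phi (sum_list P) * (psi_prod Q - psi_prod P))"
    unfolding PQ QP ip_vprod_vprod[OF assms(3) P] ip_vprod_vprod[OF Q assms(2)] sum_Q
    by (simp add: algebra_simps)
  finally show ?thesis by (simp add: hnorm_sq)
qed

definition refine_err :: "real \<Rightarrow> real \<Rightarrow> real" where
  "refine_err T e = sqrt (phi T * exp (psi T) * e * psi T)"

lemma hnorm_vprod_refines_le:
  assumes "refines Q P" "\<forall>d\<in>set Q. d > 0" "P \<noteq> []"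
    and "\<forall>p\<in>set P. psi p \<le> e" "e \<le> 1"
  shows "hnorm ip (vprod P - vprod Q) \<le> refine_err (sum_list P) e"
proof -
  have Q: "Q \<noteq> []" and P: "\<forall>d\<in>set P. d > 0" and sum_Q: "sum_list Q = sum_list P"
    using assms(1-3) refines_nonempty refines_pos refines_sum_list by blast+
  define T where "T = sum_list P"
  have T: "T > 0" using sum_list_pos[OF assms(3) P] T_def by simp
  have "psi_prod Q \<le> exp (psi T)"
    using prod_list_one_plus_le_exp[of "map psi Q"] psi_sum_list[OF Q assms(2)] psi_nonneg assms(2) sum_Q
    by (simp add: psi_prod_def comp_def T_def)
  moreover have "exp ((1 - e) * psi T) \<le> psi_prod P"
    using exp_le_prod_list_one_plus[of "map psi P" e] psi_sum_list[OF assms(3) P] psi_nonneg P assms(4,5)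
    by (simp add: psi_prod_def comp_def T_def)
  ultimately have "psi_prod Q - psi_prod P \<le> exp (psi T) - exp ((1 - e) * psi T)"
    by simp
  also have "\<dots> = exp (psi T) * (1 - exp (- (e * psi T)))"
    by (simp add: algebra_simps exp_diff exp_minus field_simps)
  also have "\<dots> \<le> exp (psi T) * (e * psi T)"
    using exp_ge_add_one_self[of "- (e * psi T)"] by (intro mult_left_mono) auto
  finally have "phi T * (psi_prod Q - psi_prod P) \<le> phi T * (exp (psi T) * (e * psi T))"
    using phi_pos[OF T] by (intro mult_left_mono) auto
  then have "(hnorm ip (vprod P - vprod Q))\<^sup>2 \<le> phi T * exp (psi T) * e * psi T"
    using hnorm_vprod_refines_sq[OF assms(1-3)] by (simp add: T_def algebra_simps)
  then show ?thesis
    unfolding refine_err_def T_def by (simp add: real_le_rsqrt hnorm_nonneg)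
qed

lemma hnorm_vprod_diff_le:
  assumes P: "P \<noteq> []" "\<forall>d\<in>set P. d > 0" "\<forall>p\<in>set P. psi p \<le> e\<^sub>1" "e\<^sub>1 \<le> 1"
    and Q: "Q \<noteq> []" "\<forall>d\<in>set Q. d > 0" "\<forall>p\<in>set Q. psi p \<le> e\<^sub>2" "e\<^sub>2 \<le> 1"
    and sum: "sum_list P = sum_list Q"
  shows "hnorm ip (vprod P - vprod Q) \<le> refine_err (sum_list P) e\<^sub>1 + refine_err (sum_list P) e\<^sub>2"
proof -
  obtain R where R: "\<forall>d\<in>set R. d > 0" "refines R P" "refines R Q"
    using common_refinement[OF P(2) Q(2) P(1) Q(1) sum] by blast
  have "hnorm ip (vprod P - vprod Q) \<le> hnorm ip (vprod P - vprod R) + hnorm ip (vprod Q - vprod R)"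
    using hnorm_triangle_diff hnorm_minus_commute by metis
  also have "\<dots> \<le> refine_err (sum_list P) e\<^sub>1 + refine_err (sum_list P) e\<^sub>2"
    using hnorm_vprod_refines_le[OF R(2,1) P(1,3,4)] hnorm_vprod_refines_le[OF R(3,1) Q(1,3,4)] sum
    by simp
  finally show ?thesis .
qed

lemma refine_err_tendsto: "(\<lambda>n. refine_err T (c / real (Suc n))) \<longlonglongrightarrow> 0"
proof -
  have "(\<lambda>n. sqrt (phi T * exp (psi T) * (c / real (Suc n)) * psi T)) \<longlonglongrightarrow> sqrt (phi T * exp (psi T) * 0 * psi T)"
    by (intro tendsto_intros div_Suc_tendsto_0)
  then show ?thesis by (simp add: refine_err_def)
qed

lemma eventually_div_Suc_le_1: "eventually (\<lambda>n. c / real (Suc n) \<le> 1) sequentially"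
proof -
  have "eventually (\<lambda>n. c / real (Suc n) < 1) sequentially"
    by (rule order_tendstoD(2)[OF div_Suc_tendsto_0]) simp
  then show ?thesis by (rule eventually_mono) simp
qed

definition approx :: "nat \<Rightarrow> real \<Rightarrow> 'a" where
  "approx n t = vprod (uniform_partition n t)"

lemma approx_mem: "t > 0 \<Longrightarrow> approx n t \<in> E t"
  using vprod_mem[OF uniform_partition_nonempty uniform_partition_pos]
  unfolding approx_def sum_list_uniform_partition .

lemma psi_uniform_partition:
  assumes "t > 0" "p \<in> set (uniform_partition n t)"
  shows "psi p = psi t / real (Suc n)"
proof -
  have "psi t = sum_list (map psi (uniform_partition n t))"
    using psi_sum_list[OF uniform_partition_nonempty uniform_partition_pos[OF assms(1)]]
    by (simp add: sum_list_uniform_partition)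
  also have "\<dots> = real (Suc n) * psi (t / real (Suc n))"
    unfolding uniform_partition_def map_replicate sum_list_replicate ..
  finally have "psi (t / real (Suc n)) = psi t / real (Suc n)"
    by (simp add: eq_divide_eq mult.commute del: of_nat_Suc)
  then show ?thesis
    using assms(2) by (simp add: uniform_partition_def del: of_nat_Suc replicate_Suc)
qed

lemma hnorm_vprod_approx_le:
  assumes "t > 0" "P \<noteq> []" "\<forall>d\<in>set P. d > 0" "sum_list P = t" "\<forall>p\<in>set P. psi p \<le> e" "e \<le> 1"
    and "psi t / real (Suc n) \<le> 1"
  shows "hnorm ip (vprod P - approx n t) \<le> refine_err t e + refine_err t (psi t / real (Suc n))"
  using hnorm_vprod_diff_le[OF assms(2,3,5,6) uniform_partition_nonempty uniform_partition_pos[OF assms(1)] _ assms(7)]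
    psi_uniform_partition[OF assms(1)] assms(4)
  by (simp add: approx_def sum_list_uniform_partition)

lemma approx_Cauchy:
  assumes "t > 0"
  shows "\<forall>e>0. \<exists>N. \<forall>m\<ge>N. \<forall>n\<ge>N. hnorm ip (approx m t - approx n t) < e"
proof (intro allI impI)
  fix e :: real assume "e > 0"
  then have "eventually (\<lambda>n. refine_err t (psi t / real (Suc n)) < e / 2) sequentially"
    using refine_err_tendsto by (intro order_tendstoD(2)) auto
  then have "eventually (\<lambda>n. refine_err t (psi t / real (Suc n)) < e / 2 \<and> psi t / real (Suc n) \<le> 1) sequentially"
    using eventually_div_Suc_le_1 by (rule eventually_conj)
  then obtain N where N: "\<And>n. n \<ge> N \<Longrightarrow> refine_err t (psi t / real (Suc n)) < e / 2 \<and> psi t / real (Suc n) \<le> 1"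
    unfolding eventually_sequentially by blast
  have "hnorm ip (approx m t - approx n t) < e" if "m \<ge> N" "n \<ge> N" for m n
  proof -
    have "hnorm ip (approx m t - approx n t) \<le> refine_err t (psi t / real (Suc m)) + refine_err t (psi t / real (Suc n))"
      using hnorm_vprod_approx_le[OF assms uniform_partition_nonempty uniform_partition_pos[OF assms]
          sum_list_uniform_partition _ _ conjunct2[OF N[OF that(2)]], of m]
        psi_uniform_partition[OF assms] N[OF that(1)]
      by (simp add: approx_def)
    then show ?thesis using N[OF that(1)] N[OF that(2)] by linarith
  qed
  then show "\<exists>N. \<forall>m\<ge>N. \<forall>n\<ge>N. hnorm ip (approx m t - approx n t) < e" by blast
qed

text \<open>The product integral \<open>expo t = lim \<Prod>\<^sub>i (u + b)(t/n)\<close> of the root.\<close>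

definition expo :: "real \<Rightarrow> 'a" where
  "expo t = (SOME L. (\<lambda>n. hnorm ip (approx n t - L)) \<longlonglongrightarrow> 0)"

lemma approx_tendsto: "t > 0 \<Longrightarrow> (\<lambda>n. hnorm ip (approx n t - expo t)) \<longlonglongrightarrow> 0"
  unfolding expo_def by (rule someI_ex) (rule hilbert_complete[OF approx_Cauchy])

lemma expo_mem: "t > 0 \<Longrightarrow> expo t \<in> E t"
  by (rule hclosedD[OF fibre_hclosed approx_mem approx_tendsto])

lemma hnorm_vprod_expo_le:
  assumes "t > 0" "P \<noteq> []" "\<forall>d\<in>set P. d > 0" "sum_list P = t" "\<forall>p\<in>set P. psi p \<le> e" "e \<le> 1"
  shows "hnorm ip (vprod P - expo t) \<le> refine_err t e"
proof -
  have bound: "eventually (\<lambda>n. hnorm ip (vprod P - expo t) \<le>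
      refine_err t e + refine_err t (psi t / real (Suc n)) + hnorm ip (approx n t - expo t)) sequentially"
    using eventually_div_Suc_le_1
  proof (rule eventually_mono)
    fix n assume n: "psi t / real (Suc n) \<le> 1"
    show "hnorm ip (vprod P - expo t) \<le>
        refine_err t e + refine_err t (psi t / real (Suc n)) + hnorm ip (approx n t - expo t)"
      using hnorm_vprod_approx_le[OF assms n] hnorm_triangle_diff[of "vprod P" "expo t" "approx n t"]
      by linarith
  qed
  have lim: "(\<lambda>n. refine_err t e + refine_err t (psi t / real (Suc n)) + hnorm ip (approx n t - expo t))
      \<longlonglongrightarrow> refine_err t e + 0 + 0"
    by (intro tendsto_intros refine_err_tendsto approx_tendsto assms(1))
  from tendsto_le[OF trivial_limit_sequentially lim tendsto_const bound] show ?thesis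
    by simp
qed

lemma hnorm_v_expo_le:
  assumes "t > 0" "psi t \<le> 1"
  shows "hnorm ip (expo t - v t) \<le> psi t * sqrt (phi t * exp (psi t))"
proof -
  have "hnorm ip (v t - expo t) \<le> refine_err t (psi t)"
    using hnorm_vprod_expo_le[of t "[t]" "psi t"] assms by simp
  also have "\<dots> = psi t * sqrt (phi t * exp (psi t))"
    using psi_nonneg[OF assms(1)] by (simp add: refine_err_def real_sqrt_mult power2_eq_square[symmetric] mult_ac)
  finally show ?thesis by (simp add: hnorm_minus_commute)
qed

lemma expo_nonzero:
  assumes "t > 0"
  shows "expo t \<noteq> 0"
proof
  assume "expo t = 0"
  then have lim: "(\<lambda>n. hnorm ip (approx n t)) \<longlonglongrightarrow> 0"
    using approx_tendsto[OF assms] by simp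
  have "sqrt (phi t) \<le> hnorm ip (approx n t)" for n
  proof -
    have "1 \<le> psi_prod (uniform_partition n t)"
      using prod_list_one_plus_ge_1[of "map psi (uniform_partition n t)"] psi_nonneg uniform_partition_pos[OF assms]
      by (simp add: psi_prod_def comp_def)
    then have "phi t \<le> phi t * psi_prod (uniform_partition n t)"
      using phi_pos[OF assms] by simp
    also have "\<dots> = (hnorm ip (approx n t))\<^sup>2"
      using ip_vprod_vprod[OF uniform_partition_nonempty uniform_partition_pos[OF assms]]
      by (simp add: approx_def hnorm_sq sum_list_uniform_partition)
    finally show ?thesis by (simp add: real_le_lsqrt hnorm_nonneg)
  qed
  then have "sqrt (phi t) \<le> 0"
    by (intro tendsto_le[OF trivial_limit_sequentially lim tendsto_const]) simp
  then show False using phi_pos[OF assms] by simp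
qed

lemma expo_add:
  assumes s: "s > 0" and t: "t > 0"
  shows "expo (s + t) = pm s t (expo s) (expo t)"
proof -
  define e where "e n = max (psi s) (psi t) / real (Suc n)" for n
  define P where "P n = uniform_partition n s @ uniform_partition n t" for n
  have vprod_P: "vprod (P n) = pm s t (approx n s) (approx n t)" for n
    using sec_prod_append[OF uniform_partition_nonempty uniform_partition_nonempty
        uniform_partition_pos[OF s] uniform_partition_pos[OF t] v_pos_sec]
    by (simp add: P_def approx_def sum_list_uniform_partition)
  have psi_P: "\<forall>p\<in>set (P n). psi p \<le> e n" for n
    using psi_uniform_partition[OF s] psi_uniform_partition[OF t]
    by (auto simp: P_def e_def divide_right_mono)
  let ?err = "\<lambda>n. hnorm ip (expo s - approx n s) * hnorm ip (expo t)
      + (hnorm ip (approx n s - expo s) + hnorm ip (expo s)) * hnorm ip (expo t - approx n t)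
      + refine_err (s + t) (e n)"
  have bound: "eventually (\<lambda>n. hnorm ip (pm s t (expo s) (expo t) - expo (s + t)) \<le> ?err n) sequentially"
    using eventually_div_Suc_le_1[of "max (psi s) (psi t)"]
  proof (rule eventually_mono)
    fix n assume "max (psi s) (psi t) / real (Suc n) \<le> 1"
    then have "hnorm ip (vprod (P n) - expo (s + t)) \<le> refine_err (s + t) (e n)"
      using s t psi_P unfolding e_def
      by (intro hnorm_vprod_expo_le) (auto simp: P_def uniform_partition_nonempty uniform_partition_pos sum_list_uniform_partition)
    moreover have "hnorm ip (pm s t (expo s) (expo t) - pm s t (approx n s) (approx n t)) \<le>
        hnorm ip (expo s - approx n s) * hnorm ip (expo t) + hnorm ip (approx n s) * hnorm ip (expo t - approx n t)"
      using s t by (intro hnorm_pm_diff_le expo_mem approx_mem)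
    moreover have "hnorm ip (approx n s) * hnorm ip (expo t - approx n t) \<le>
        (hnorm ip (approx n s - expo s) + hnorm ip (expo s)) * hnorm ip (expo t - approx n t)"
      using hnorm_triangle[of "approx n s - expo s" "expo s"] by (simp add: mult_right_mono hnorm_nonneg)
    ultimately show "hnorm ip (pm s t (expo s) (expo t) - expo (s + t)) \<le> ?err n"
      using hnorm_triangle_diff[of "pm s t (expo s) (expo t)" "expo (s + t)" "vprod (P n)"]
      unfolding vprod_P by linarith
  qed
  have lim: "?err \<longlonglongrightarrow> 0 * hnorm ip (expo t) + (0 + hnorm ip (expo s)) * 0 + 0"
    unfolding e_def
    by (intro tendsto_intros refine_err_tendsto approx_tendsto s t)
      (use approx_tendsto[OF s] approx_tendsto[OF t] hnorm_minus_commute in simp_all)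
  have "hnorm ip (pm s t (expo s) (expo t) - expo (s + t)) \<le> 0"
    using tendsto_le[OF trivial_limit_sequentially lim tendsto_const bound] by simp
  then have "hnorm ip (pm s t (expo s) (expo t) - expo (s + t)) = 0"
    using hnorm_nonneg by (simp add: order_antisym)
  then show ?thesis
    by (simp add: hnorm_eq_0_iff)
qed

lemma expo_Sec: "expo \<in> Sec"
proof (rule Sec_limit)
  show "approx n \<in> Sec" for n
    using sec_prod_uniform_partition_Sec[OF v_Sec] by (simp add: approx_def[abs_def])
qed (use expo_mem approx_tendsto in \<open>auto simp: pos_sec_def\<close>)

lemma expo_unit: "is_unit E pm Sec expo"
  unfolding is_unit_def using expo_Sec expo_nonzero expo_add by blast
end

context unit_with_root
begin

lemma is_root_sc: "is_root ip pm Sec u (\<lambda>t. sc c (b t))"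
  unfolding is_root_def additive_unit_def
proof (intro conjI allI impI)
  show "(\<lambda>t. sc c (b t)) \<in> Sec" using b_Sec by (rule Sec_sc)
  show "sc c (b (s + t)) = pm s t (sc c (b s)) (u t) + pm s t (u s) (sc c (b t))" if "s > 0" "t > 0" for s t
    using that by (simp add: b_add sc_add_right pm_sc_left pm_sc_right b_mem u_mem)
  show "ip (sc c (b t)) (u t) = 0" if "t > 0" for t
    using that by (simp add: ip_sc_left ip_b_u)
qed

lemma unit_near_scaled_root:
  obtains w where "is_unit E pm Sec w"
    and "\<And>t. t > 0 \<Longrightarrow> (cmod c)\<^sup>2 * psi t \<le> 1 \<Longrightarrow>
      hnorm ip (w t - (u t + sc c (b t))) \<le> (cmod c)\<^sup>2 * psi t * sqrt (phi t * exp ((cmod c)\<^sup>2 * psi t))"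
proof -
  interpret scaled: unit_with_root ip sc E pm Sec u "\<lambda>t. sc c (b t)"
    using product_system unit is_root_sc by unfold_locales
  have psi: "scaled.psi t = (cmod c)\<^sup>2 * psi t" for t
  proof -
    have "Re (ip (sc c (b t)) (sc c (b t))) = (cmod c)\<^sup>2 * Re (ip (b t) (b t))"
      using hnorm_sc[of c "b t"] by (simp add: power_mult_distrib flip: hnorm_sq)
    then show ?thesis unfolding scaled.psi_def psi_def by (simp only: times_divide_eq_right)
  qed
  show ?thesis
  proof (rule that[OF scaled.expo_unit])
    show "hnorm ip (scaled.expo t - (u t + sc c (b t))) \<le> (cmod c)\<^sup>2 * psi t * sqrt (phi t * exp ((cmod c)\<^sup>2 * psi t))"
      if "t > 0" "(cmod c)\<^sup>2 * psi t \<le> 1" for t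
      using scaled.hnorm_v_expo_le[OF that[unfolded psi[symmetric]]] unfolding psi scaled.v_def .
  qed
qed

lemma root_mem_closed_subspace:
  assumes A: "closed_subspace ip sc A" and t: "t > 0"
    and units: "\<And>w. is_unit E pm Sec w \<Longrightarrow> w t \<in> A"
  shows "b t \<in> A"
proof -
  define N where "N n = real (Suc n)" for n
  have N: "N n \<ge> 1" for n unfolding N_def by simp
  define c where "c n = complex_of_real (1 / N n)" for n
  have "\<exists>w. is_unit E pm Sec w \<and> ((cmod (c n))\<^sup>2 * psi t \<le> 1 \<longrightarrow>
      hnorm ip (w t - (u t + sc (c n) (b t))) \<le>
        (cmod (c n))\<^sup>2 * psi t * sqrt (phi t * exp ((cmod (c n))\<^sup>2 * psi t)))" for n
    using unit_near_scaled_root[of "c n"] t by metis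
  then obtain W where W: "\<And>n. is_unit E pm Sec (W n) \<and> ((cmod (c n))\<^sup>2 * psi t \<le> 1 \<longrightarrow>
      hnorm ip (W n t - (u t + sc (c n) (b t))) \<le>
        (cmod (c n))\<^sup>2 * psi t * sqrt (phi t * exp ((cmod (c n))\<^sup>2 * psi t)))"
    by metis
  \<comment> \<open>\<open>W\<^sub>n\<close> is the exponential of the root \<open>b / N\<^sub>n\<close>, so \<open>N\<^sub>n (W\<^sub>n t - u t) \<rightarrow> b t\<close>\<close>
  define x where "x n = sc (N n) (W n t - u t)" for n
  have lin: "lin_subspace sc A" and closed: "hclosed ip A"
    using A unfolding closed_subspace_def by auto
  have x_mem: "x n \<in> A" for n
  proof -
    have "W n t - u t \<in> A"
      using lin_subspace_diff[OF lin units[OF conjunct1[OF W]] units[OF unit]] .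
    then show ?thesis
      using lin unfolding x_def lin_subspace_def by blast
  qed
  define K where "K = psi t * sqrt (phi t * exp (psi t))"
  have bound: "eventually (\<lambda>n. hnorm ip (x n - b t) \<le> K / N n) sequentially"
    using eventually_div_Suc_le_1[of "psi t"]
  proof (rule eventually_mono)
    fix n assume "psi t / real (Suc n) \<le> 1"
    have N_sq: "1 \<le> (N n)\<^sup>2" "N n \<le> (N n)\<^sup>2"
      using N[of n] by (simp_all add: one_le_power self_le_power)
    have "psi t / (N n)\<^sup>2 \<le> psi t / N n"
      using divide_left_mono[OF N_sq(2) psi_nonneg[OF t]] N[of n] by simp
    then have small: "psi t / (N n)\<^sup>2 \<le> 1"
      using \<open>psi t / real (Suc n) \<le> 1\<close> unfolding N_def by linarith
    have le_psi: "psi t / (N n)\<^sup>2 \<le> psi t"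
      using divide_left_mono[OF N_sq(1) psi_nonneg[OF t]] N_sq N[of n] by simp
    have "cmod (c n) = 1 / N n"
      unfolding c_def norm_of_real using N[of n] by simp
    then have scale: "(cmod (c n))\<^sup>2 * psi t = psi t / (N n)\<^sup>2"
      by (simp add: power_divide)
    have "x n - b t = sc (N n) (W n t - (u t + sc (c n) (b t)))"
    proof -
      have "sc (N n) (sc (c n) (b t)) = b t"
        using N[of n] by (simp add: c_def sc_sc sc_one flip: of_real_mult)
      then show ?thesis by (simp add: x_def sc_diff_right sc_add_right)
    qed
    then have "hnorm ip (x n - b t) = N n * hnorm ip (W n t - (u t + sc (c n) (b t)))"
      using N[of n] by (simp add: hnorm_sc)
    also have "\<dots> \<le> N n * (psi t / (N n)\<^sup>2 * sqrt (phi t * exp (psi t / (N n)\<^sup>2)))"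
    proof -
      have "hnorm ip (W n t - (u t + sc (c n) (b t))) \<le> psi t / (N n)\<^sup>2 * sqrt (phi t * exp (psi t / (N n)\<^sup>2))"
        using W[of n] small unfolding scale by blast
      then show ?thesis by (rule mult_left_mono) (use N[of n] in simp)
    qed
    also have "\<dots> \<le> N n * (psi t / (N n)\<^sup>2 * sqrt (phi t * exp (psi t)))"
    proof -
      have "sqrt (phi t * exp (psi t / (N n)\<^sup>2)) \<le> sqrt (phi t * exp (psi t))"
        using le_psi phi_pos[OF t] by simp
      then show ?thesis
        using psi_nonneg[OF t] N[of n] by (intro mult_left_mono) auto
    qed
    also have "\<dots> = K / N n"
      using N[of n] by (simp add: K_def power2_eq_square)
    finally show "hnorm ip (x n - b t) \<le> K / N n" .
  qed
  have "(\<lambda>n. K / N n) \<longlonglongrightarrow> 0"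
    unfolding N_def by (rule div_Suc_tendsto_0)
  then have "(\<lambda>n. hnorm ip (x n - b t)) \<longlonglongrightarrow> 0"
    by (intro tendsto_sandwich[OF _ bound tendsto_const]) (simp add: hnorm_nonneg)
  then show ?thesis
    by (rule hclosedD[OF closed x_mem])
qed

end

theorem mainTheorem3:
  fixes ip :: "'h::ab_group_add \<Rightarrow> 'h \<Rightarrow> complex" and sc :: "complex \<Rightarrow> 'h \<Rightarrow> 'h"
    and E :: "real \<Rightarrow> 'h set" and pm :: "real \<Rightarrow> real \<Rightarrow> 'h \<Rightarrow> 'h \<Rightarrow> 'h"
    and Sec :: "(real \<Rightarrow> 'h) set" and u a :: "real \<Rightarrow> 'h"
  assumes "product_system ip sc E pm Sec"
    and "spatial E pm Sec"
    and "is_unit E pm Sec u"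
    and "is_root ip pm Sec u a"
  shows "\<forall>t>0. a t \<in> type_I_part ip sc E pm Sec t"
  \<comment> \<open>the hypothesis \<open>spatial\<close> is implied by the unit \<open>u\<close> and not needed\<close>
proof (intro allI impI)
  fix t :: real assume t: "t > 0"
  interpret unit_with_root ip sc E pm Sec u a
    using assms(1,3,4) by unfold_locales
  show "a t \<in> type_I_part ip sc E pm Sec t"
    unfolding type_I_part_def
  proof (rule InterI)
    fix A assume "A \<in> {F t |F. product_subsystem ip sc E pm F \<and>
        (\<forall>v. is_unit E pm Sec v \<longrightarrow> (\<forall>s>0. v s \<in> F s))}"
    then obtain F where "A = F t" "product_subsystem ip sc E pm F"
      and "\<And>v. is_unit E pm Sec v \<Longrightarrow> v t \<in> F t"
      using t by blast
    then show "a t \<in> A"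
      using t by (intro root_mem_closed_subspace) (auto simp: product_subsystem_def)
  qed
qed

end
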